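(* Let $(a_j)_{j\ge1}$ be a bounded sequence of nonnegative integers. If there exists a positive integer $q$ such that $a_j\le a_{j+q}$ for all $j\geq1$, then $(a_j)_{j\ge1}$ is strongly eventually periodic.
   Context: A sequence $(a_j)_{j\ge1}$ of integers is strongly eventually periodic (SEP) if there exist a positive integer $p$, a finite sequence of integers $(b_\ell)_{\ell=1}^p$ and a finite sequence of nonnegative integers $(c_\ell)_{\ell=1}^p$ such that $(a_j)_{j\ge1}$ equals $b_1,\ldots,b_p$ followed by the infinite repetition of $b_1+c_1,\ldots,b_p+c_p$. *)

theory Defs
  imports Main
begin

text \<open>A sequence (a_j)_{j>=1} of integers, represented as a function nat => int whose
  value at 0 is ignored, is strongly eventually periodic (SEP) if there exist p > 0,
  integers b_1..b_p and nonnegative integers c_1..c_p such that the sequence is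
  b_1,...,b_p followed by the infinite repetition of b_1+c_1,...,b_p+c_p.\<close>
definition SEP :: "(nat \<Rightarrow> int) \<Rightarrow> bool" where
  "SEP a \<longleftrightarrow> (\<exists>p::nat. p > 0 \<and> (\<exists>b c :: nat \<Rightarrow> int.
      (\<forall>l\<in>{1..p}. c l \<ge> 0) \<and>
      (\<forall>j\<in>{1..p}. a j = b j) \<and>
      (\<forall>j>p. a j = b ((j - 1) mod p + 1) + c ((j - 1) mod p + 1))))"

end

theory Submission
  imports Defs
begin

text \<open>Along each residue class \<open>r, r + q, r + 2q, \<dots>\<close> the sequence is nondecreasing and takes
  values in the finite set \<open>{0..B}\<close>, so it is eventually constant. Hence \<open>a\<close> is eventually
  \<open>q\<close>-periodic, say from \<open>N\<close> on. Any multiple \<open>p\<close> of \<open>q\<close> with \<open>p \<ge> N\<close> is then a period of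
  \<open>a\<close> beyond \<open>p\<close>, and \<open>a l \<le> a (l + p)\<close> by monotonicity along residue classes: this is the
  shape required by \<^const>\<open>SEP\<close>, with \<open>b = a\<close> and \<open>c l = a (l + p) - a l\<close>.\<close>

lemma periodic_from_add_mult:
  fixes f :: "nat \<Rightarrow> 'a" and k :: nat
  assumes periodic: "\<And>x. x \<ge> N \<Longrightarrow> f (x + p) = f x" and "x \<ge> N"
  shows "f (x + k * p) = f x"
proof (induction k)
  case 0
  show ?case
    by simp
next
  case (Suc k)
  have "f (x + k * p + p) = f (x + k * p)"
    using periodic \<open>x \<ge> N\<close> by simp
  with Suc.IH show ?case
    by (simp add: ac_simps)
qed

lemma shifted_mod_div_eq:
  fixes x p :: nat
  assumes "x \<ge> 1"
  shows "x = ((x - 1) mod p + 1) + (x - 1) div p * p"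
  using assms div_mult_mod_eq[of "x - 1" p] by simp

lemma SEPI:
  fixes a :: "nat \<Rightarrow> int"
  assumes "p > 0"
    and le_shift: "\<And>l. l \<in> {1..p} \<Longrightarrow> a l \<le> a (l + p)"
    and periodic: "\<And>j. j > p \<Longrightarrow> a (j + p) = a j"
  shows "SEP a"
proof -
  have tail: "a j = a ((j - 1) mod p + 1 + p)" if "j > p" for j
  proof -
    define r k where "r = (j - 1) mod p + 1" and "k = (j - 1) div p"
    have "k \<ge> 1"
      using \<open>p > 0\<close> that by (simp add: k_def less_eq_div_iff_mult_less_eq)
    moreover have "j = r + k * p"
      using shifted_mod_div_eq that by (simp add: r_def k_def)
    ultimately have "j = r + p + (k - 1) * p"
      by (cases k) auto
    moreover have "a (r + p + (k - 1) * p) = a (r + p)"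
      by (rule periodic_from_add_mult[where N = "Suc p"]) (use periodic in \<open>auto simp: r_def\<close>)
    ultimately show ?thesis
      by (simp add: r_def)
  qed
  define c where "c l = a (l + p) - a l" for l
  have "\<forall>l\<in>{1..p}. c l \<ge> 0"
    using le_shift by (simp add: c_def)
  moreover have "\<forall>j>p. a j = a ((j - 1) mod p + 1) + c ((j - 1) mod p + 1)"
    by (auto simp: c_def dest!: tail)
  ultimately show ?thesis
    unfolding SEP_def using \<open>p > 0\<close> by blast
qed

lemma mono_along_residue:
  fixes f :: "nat \<Rightarrow> 'a::order"
  assumes "\<And>j. j \<ge> 1 \<Longrightarrow> f j \<le> f (j + q)" and "j \<ge> 1"
  shows "mono (\<lambda>k. f (j + k * q))"
  unfolding mono_iff_le_Suc
proof
  fix k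
  show "f (j + k * q) \<le> f (j + Suc k * q)"
    using assms(1)[of "j + k * q"] \<open>j \<ge> 1\<close> by (simp add: ac_simps)
qed

lemma mono_finite_range_eventually_const:
  fixes f :: "nat \<Rightarrow> 'a::linorder"
  assumes "mono f" and "finite (range f)"
  shows "\<forall>\<^sub>F k in sequentially. f (Suc k) = f k"
proof -
  obtain k0 where k0: "f k0 = Max (range f)"
    using Max_in[OF \<open>finite (range f)\<close>] by auto
  have "f k = f k0" if "k \<ge> k0" for k
    using \<open>mono f\<close> that k0 Max_ge[OF \<open>finite (range f)\<close>, of "f k"]
    by (metis antisym monoD rangeI)
  then show ?thesis
    unfolding eventually_sequentially by (metis le_SucI)
qed

lemma eventually_periodic:
  fixes a :: "nat \<Rightarrow> 'a::linorder"
  assumes "q > 0"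
    and finite_values: "finite (a ` {1..})"
    and step: "\<And>j. j \<ge> 1 \<Longrightarrow> a j \<le> a (j + q)"
  obtains N where "\<And>x. x \<ge> N \<Longrightarrow> a (x + q) = a x"
proof -
  have "\<forall>\<^sub>F k in sequentially. a (r + Suc k * q) = a (r + k * q)" if "r \<in> {1..q}" for r
  proof -
    have "range (\<lambda>k. a (r + k * q)) \<subseteq> a ` {1..}"
      using that by auto
    then have "finite (range (\<lambda>k. a (r + k * q)))"
      using finite_values finite_subset by blast
    then show ?thesis
      using mono_finite_range_eventually_const mono_along_residue[where f = a, OF step] that by fastforce
  qed
  then have "\<forall>\<^sub>F k in sequentially. \<forall>r\<in>{1..q}. a (r + Suc k * q) = a (r + k * q)"
    by (simp add: eventually_ball_finite)
  then obtain K where K: "\<And>k r. k \<ge> K \<Longrightarrow> r \<in> {1..q} \<Longrightarrow> a (r + Suc k * q) = a (r + k * q)"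
    unfolding eventually_sequentially by blast
  show ?thesis
  proof
    fix x assume "x \<ge> K * q + 1"
    define r k where "r = (x - 1) mod q + 1" and "k = (x - 1) div q"
    have "k \<ge> K"
      using \<open>q > 0\<close> \<open>x \<ge> K * q + 1\<close> by (simp add: k_def less_eq_div_iff_mult_less_eq)
    moreover have "r \<in> {1..q}"
      using \<open>q > 0\<close> by (simp add: r_def Suc_leI)
    moreover have "x = r + k * q"
      using shifted_mod_div_eq \<open>x \<ge> K * q + 1\<close> by (simp add: r_def k_def)
    ultimately show "a (x + q) = a x"
      using K[of k r] by (simp add: ac_simps)
  qed
qed

theorem lemma5p2:
  fixes a :: "nat \<Rightarrow> int"
  assumes nonneg: "\<forall>j\<ge>1. a j \<ge> 0"
    and bounded: "\<exists>B. \<forall>j\<ge>1. a j \<le> B"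
    and q: "\<exists>q::nat. q > 0 \<and> (\<forall>j\<ge>1. a j \<le> a (j + q))"
  shows "SEP a"
proof -
  obtain B where B: "\<And>j. j \<ge> 1 \<Longrightarrow> a j \<le> B"
    using bounded by blast
  obtain q where "q > 0" and step: "\<And>j. j \<ge> 1 \<Longrightarrow> a j \<le> a (j + q)"
    using q by blast
  have "a ` {1..} \<subseteq> {0..B}"
    using nonneg B by auto
  then obtain N where N: "\<And>x. x \<ge> N \<Longrightarrow> a (x + q) = a x"
    using eventually_periodic[where a = a, OF \<open>q > 0\<close> _ step] finite_subset by blast
  define p where "p = Suc N * q"
  have "Suc N * 1 \<le> p"
    unfolding p_def using \<open>q > 0\<close> by (intro mult_le_mono2) simp
  then have "p > N"
    by simp
  show ?thesis
  proof (rule SEPI)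
    show "p > 0"
      using \<open>p > N\<close> by simp
    show "a l \<le> a (l + p)" if "l \<in> {1..p}" for l
      using monoD[OF mono_along_residue[where f = a, OF step], of l 0 "Suc N"] that
      unfolding p_def by simp
    show "a (j + p) = a j" if "j > p" for j
      using periodic_from_add_mult[of N a q j "Suc N"] N that \<open>p > N\<close> unfolding p_def by simp
  qed
qed

end
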